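(* Let $p$ be a prime and $G$ a finite abelian $p$-group. Then $G$ is a $2$-closed group if and only if $G$ is cyclic.
   Context: Permutations act on the right. For $X\leq{\rm Sym}(\Omega)$, the $2$-closure of $X$ on $\Omega$ is $X^{(2),\Omega}=\{\theta\in{\rm Sym}(\Omega)\mid \forall \alpha,\beta\in\Omega\ \exists g\in X:\ \alpha^\theta=\alpha^g,\ \beta^\theta=\beta^g\}$. An abstract group $G$ is called a $2$-closed group if $H=H^{(2),\Omega}$ for every set $\Omega$ and every subgroup $H\leq{\rm Sym}(\Omega)$ with $H\cong G$. *)

theory Defs
  imports "HOL-Algebra.Algebra"
begin

text \<open>Sym(Omega) is BijGroup Omega (bijections of Omega, extensional outside Omega).
  The 2-closure of a permutation group X on Omega.\<close>
definition two_closure :: "'b set \<Rightarrow> ('b \<Rightarrow> 'b) set \<Rightarrow> ('b \<Rightarrow> 'b) set" where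
  "two_closure Om K = {th \<in> Bij Om. \<forall>a\<in>Om. \<forall>b\<in>Om. \<exists>f\<in>K. th a = f a \<and> th b = f b}"

definition two_closed_group :: "'b itself \<Rightarrow> ('a, 'c) monoid_scheme \<Rightarrow> bool" where
  "two_closed_group (_::'b itself) G \<longleftrightarrow>
     (\<forall>(Om::'b set) H. subgroup H (BijGroup Om) \<and> (BijGroup Om)\<lparr>carrier := H\<rparr> \<cong> G
        \<longrightarrow> two_closure Om H = H)"

end

(* A cyclic p-group H of permutations has a point with trivial stabiliser: the subgroup of order p
   of H moves some point and is contained in every nontrivial subgroup of H.  A permutation group
   with such a point is determined by the images of that single point, so it equals its 2-closure.

   Conversely, a non-cyclic abelian p-group G contains an element x of order p and an element g
   with <x> and <g> intersecting trivially, and then x is not in <x^-1 g>.  Let G act on the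
   disjoint union of the coset spaces of <x>, <g> and <x^-1 g>.  The action is faithful, and the
   permutation acting as x on the cosets of <x^-1 g> and trivially elsewhere agrees on any two points
   with one of 1, x or g, yet it is not induced by G.  Embedding this finite set into the infinite
   type gives a faithful permutation representation of G that is not 2-closed. *)

theory Submission
  imports Defs
begin

no_notation (ASCII) subset_mset (infix \<open><#\<close> 50)

context group
begin

(* x [^] p ^ n generates the subgroup of order p of <x>, which lies in every nontrivial
   subgroup of <x>. *)
lemma exists_pow_eq_socle:
  assumes p: "Factorial_Ring.prime (p::nat)" and x: "x \<in> carrier G" and ord: "ord x = p ^ Suc n"
    and ne: "x [^] (k::nat) \<noteq> \<one>"
  shows "\<exists>m::nat. (x [^] k) [^] m = x [^] (p ^ n)"
proof -
  have k0: "k \<noteq> 0" using ne by (metis nat_pow_0)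
  obtain i where i: "i \<le> Suc n" "gcd k (p ^ Suc n) = p ^ i"
    using divides_primepow_nat[OF p] by (meson gcd_dvd2)
  have "i \<noteq> Suc n"
  proof
    assume "i = Suc n"
    then have "ord x dvd k" using i(2) ord by (metis gcd_dvd1)
    then show False using ne pow_eq_id[OF x] by blast
  qed
  then have "i \<le> n" using i(1) by simp
  obtain u v where uv: "k * u = p ^ Suc n * v + p ^ i" using bezout_nat[OF k0] i(2) by metis
  have pn: "p ^ i * p ^ (n - i) = p ^ n" using \<open>i \<le> n\<close> by (simp flip: power_add)
  have "k * (u * p ^ (n - i)) = (p ^ Suc n * v + p ^ i) * p ^ (n - i)"
    by (metis uv mult.assoc)
  also have "\<dots> = p ^ Suc n * (v * p ^ (n - i)) + p ^ n"
    using pn by (simp only: distrib_right mult.assoc)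
  finally have "(x [^] k) [^] (u * p ^ (n - i)) = x [^] (p ^ Suc n * (v * p ^ (n - i)) + p ^ n)"
    using x by (simp add: nat_pow_pow)
  also have "\<dots> = x [^] (p ^ Suc n * (v * p ^ (n - i))) \<otimes> x [^] (p ^ n)"
    using x by (simp add: nat_pow_mult)
  also have "x [^] (p ^ Suc n * (v * p ^ (n - i))) = \<one>"
    using pow_eq_id[OF x] ord by simp
  finally have "(x [^] k) [^] (u * p ^ (n - i)) = x [^] (p ^ n)" using x by simp
  then show ?thesis by blast
qed

lemma ord_prime_power:
  assumes "finite (carrier G)" "Factorial_Ring.prime (p::nat)" "order G = p ^ n" "a \<in> carrier G"
  shows "\<exists>i. ord a = p ^ i"
  using ord_dvd_group_order[OF assms(4)] assms(3) divides_primepow_nat[OF assms(2)] by auto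

lemma ord_dvd_ord_if_le:
  assumes fin: "finite (carrier G)" and p: "Factorial_Ring.prime (p::nat)" and ordG: "order G = p ^ n"
    and "a \<in> carrier G" "g \<in> carrier G" "ord a \<le> ord g"
  shows "ord a dvd ord g"
proof -
  obtain i j where "ord a = p ^ i" "ord g = p ^ j"
    using ord_prime_power[OF fin p ordG] assms(4,5) by metis
  then show ?thesis
    using assms(6) power_le_imp_le_exp[OF prime_gt_1_nat[OF p]] by (simp add: le_imp_power_dvd)
qed

lemma exists_outside_subgroup_with_pth_power_inside:
  assumes fin: "finite (carrier G)" and p: "Factorial_Ring.prime (p::nat)" and ordG: "order G = p ^ n"
    and H: "subgroup H G" "H \<noteq> carrier G"
  shows "\<exists>h\<in>carrier G. h \<notin> H \<and> h [^] p \<in> H"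
proof -
  have "\<exists>h. h \<in> carrier G \<and> h \<notin> H" using H subgroup.subset by blast
  then obtain h where h: "h \<in> carrier G" "h \<notin> H"
    and least: "\<forall>y. y \<in> carrier G \<and> y \<notin> H \<longrightarrow> ord h \<le> ord y"
    using ex_has_least_nat[of "\<lambda>h. h \<in> carrier G \<and> h \<notin> H" _ ord] by blast
  obtain i where i: "ord h = p ^ i" using ord_prime_power[OF fin p ordG h(1)] by blast
  have "ord h \<noteq> 1" using h ord_eq_1 subgroup.one_closed[OF H(1)] by metis
  then have "i \<noteq> 0" using i by auto
  then have "ord (h [^] p) < ord h"
    using ord_pow[OF h(1), of p] i prime_gt_1_nat[OF p] by simp
  then have "h [^] p \<in> H" using least h(1) nat_pow_closed[OF h(1), of p] by (meson leD)
  then show ?thesis using h by blast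
qed

lemma generate_Int_subgroup_eq_one:
  assumes p: "Factorial_Ring.prime (p::nat)" and x: "x \<in> carrier G" "x [^] p = \<one>"
    and H: "subgroup H G" "x \<notin> H"
  shows "generate G {x} \<inter> H = {\<one>}"
proof -
  have "x \<noteq> \<one>" using H subgroup.one_closed by metis
  then have "ord x = p"
    using pow_eq_id[OF x(1)] x(2) ord_eq_1[OF x(1)] prime_nat_iff[of p] p by auto
  then have ord: "ord x = p ^ Suc 0" and "ord x \<noteq> 0" using p by auto
  have "y = \<one>" if y: "y \<in> generate G {x}" "y \<in> H" for y
  proof (rule ccontr)
    assume "y \<noteq> \<one>"
    moreover obtain j :: nat where j: "y = x [^] j"
      using y(1) generate_pow_nat[OF x(1) \<open>ord x \<noteq> 0\<close>] by auto
    ultimately obtain m :: nat where "(x [^] j) [^] m = x [^] (p ^ 0)"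
      using exists_pow_eq_socle[OF p x(1) ord] by blast
    then have "y [^] m = x" using j x(1) by simp
    moreover have "y [^] int m \<in> H" using subgroup_int_pow_closed[OF H(1) y(2)] .
    ultimately show False using H(2) by (simp add: int_pow_int)
  qed
  then show ?thesis
    using subgroup.one_closed[OF H(1)] generate.one by blast
qed

end

context comm_group
begin

lemma pow_prime_eq_one_outside_cyclic_subgroup:
  assumes fin: "finite (carrier G)" and p: "Factorial_Ring.prime (p::nat)" and ordG: "order G = p ^ n"
    and g: "g \<in> carrier G" and dvd_g: "\<And>a. a \<in> carrier G \<Longrightarrow> ord a dvd ord g"
    and h: "h \<in> carrier G" "h \<notin> generate G {g}" "h [^] p \<in> generate G {g}"
  shows "p dvd ord g \<and> (\<exists>x\<in>carrier G. x [^] p = \<one> \<and> x \<notin> generate G {g})"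
proof -
  have D: "generate G {g} = {g [^] k | k. k \<in> (UNIV :: nat set)}"
    using generate_pow_on_finite_carrier[OF fin g] .
  obtain k :: nat where k: "h [^] p = g [^] k" using h(3) D by blast
  obtain m where m: "ord g = p ^ m" using ord_prime_power[OF fin p ordG g] by blast
  have "ord h \<noteq> 1" using h(1,2) ord_eq_1 generate.one by metis
  moreover have "ord h dvd p ^ m" using dvd_g[OF h(1)] m by simp
  ultimately have "m \<noteq> 0" by (metis nat_dvd_1_iff_1 power_0)
  then have pm: "p ^ m = p * p ^ (m - 1)" by (simp flip: power_Suc)
  have "g [^] (k * p ^ (m - 1)) = h [^] (p ^ m)"
    using g h(1) k pm by (simp add: nat_pow_pow flip: nat_pow_pow[of h])
  also have "\<dots> = \<one>" using pow_eq_id[OF h(1)] dvd_g[OF h(1)] m by simp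
  finally have "p * p ^ (m - 1) dvd k * p ^ (m - 1)" using pow_eq_id[OF g] m pm by simp
  then obtain k' where k': "k = p * k'" using prime_gt_1_nat[OF p] by auto
  define x where "x = h \<otimes> inv (g [^] k')"
  have x: "x \<in> carrier G" unfolding x_def using g h by simp
  have "x [^] p = h [^] p \<otimes> inv ((g [^] k') [^] p)"
    unfolding x_def using g h by (simp add: pow_mult_distrib m_comm nat_pow_inv)
  also have "\<dots> = \<one>" using g k k' by (simp add: nat_pow_pow mult.commute)
  finally have "x [^] p = \<one>" .
  moreover have "x \<notin> generate G {g}"
  proof
    assume "x \<in> generate G {g}"
    moreover have "g [^] k' \<in> generate G {g}" using D by blast
    ultimately have "x \<otimes> g [^] k' \<in> generate G {g}"
      using subgroup.m_closed[OF generate_is_subgroup] g by simp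
    moreover have "x \<otimes> g [^] k' = h" unfolding x_def using h g by (simp add: m_assoc)
    ultimately show False using h(2) by simp
  qed
  ultimately show ?thesis using x m \<open>m \<noteq> 0\<close> by auto
qed

lemma noncyclic_prime_power_witness:
  assumes fin: "finite (carrier G)" and p: "Factorial_Ring.prime (p::nat)" and ordG: "order G = p ^ n"
    and nc: "\<not> cyclic_group G"
  shows "\<exists>g\<in>carrier G. \<exists>x\<in>carrier G. x [^] p = \<one> \<and> x \<notin> generate G {g} \<and> p dvd ord g"
proof -
  have "Max (ord ` carrier G) \<in> ord ` carrier G" using fin by (intro Max_in) auto
  then obtain g where g: "g \<in> carrier G" "ord g = Max (ord ` carrier G)" by auto
  have dvd_g: "ord a dvd ord g" if "a \<in> carrier G" for a
    using ord_dvd_ord_if_le[OF fin p ordG that g(1)] g fin that by simp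
  have "generate G {g} \<noteq> carrier G"
  proof
    assume "generate G {g} = carrier G"
    then have "carrier G = range (\<lambda>k::int. g [^] k)"
      using generate_pow[OF g(1)] by (simp add: full_SetCompr_eq)
    then show False using nc g(1) cyclic_group by blast
  qed
  then obtain h where "h \<in> carrier G" "h \<notin> generate G {g}" "h [^] p \<in> generate G {g}"
    using exists_outside_subgroup_with_pth_power_inside[OF fin p ordG generate_is_subgroup] g(1)
    by blast
  then show ?thesis
    using pow_prime_eq_one_outside_cyclic_subgroup[OF fin p ordG g(1) dvd_g] g(1) by blast
qed

lemma notin_generate_inv_mult:
  assumes fin: "finite (carrier G)" and xg: "x \<in> carrier G" "g \<in> carrier G"
    and xp: "x [^] p = \<one>" and "p dvd ord g"
    and inter: "generate G {x} \<inter> generate G {g} = {\<one>}" and "x \<noteq> \<one>"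
  shows "x \<notin> generate G {inv x \<otimes> g}"
proof
  assume "x \<in> generate G {inv x \<otimes> g}"
  then obtain k :: nat where k: "x = (inv x \<otimes> g) [^] k"
    using generate_pow_on_finite_carrier[OF fin] xg by auto
  then have eq: "x = inv (x [^] k) \<otimes> g [^] k" using xg by (simp add: nat_pow_distrib nat_pow_inv)
  have "x [^] k \<otimes> (inv (x [^] k) \<otimes> g [^] k) = g [^] k" using xg by (simp add: m_assoc[symmetric])
  then have xk: "x [^] k \<otimes> x = g [^] k" by (simp only: eq[symmetric])
  then have "g [^] k = x [^] Suc k" using xg by simp
  then have "g [^] k \<in> generate G {x} \<inter> generate G {g}"
    using generate_pow_on_finite_carrier[OF fin xg(1)] generate_pow_on_finite_carrier[OF fin xg(2)]
    by blast
  then have "g [^] k = \<one>" using inter by blast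
  then have "p dvd k" using pow_eq_id[OF xg(2)] \<open>p dvd ord g\<close> dvd_trans by blast
  then have "x [^] k = \<one>" using xp xg by (auto simp flip: nat_pow_pow)
  then show False using xk \<open>g [^] k = \<one>\<close> xg \<open>x \<noteq> \<one>\<close> by simp
qed

end

lemma carrier_BijGroup: "carrier (BijGroup S) = Bij S"
  by (simp add: BijGroup_def)

lemma one_BijGroup: "\<one>\<^bsub>BijGroup S\<^esub> = (\<lambda>x\<in>S. x)"
  by (simp add: BijGroup_def)

lemma Bij_moves_point:
  assumes "f \<in> Bij S" "f \<noteq> \<one>\<^bsub>BijGroup S\<^esub>"
  shows "\<exists>a\<in>S. f a \<noteq> a"
  using assms extensionalityI[of f S "\<lambda>x\<in>S. x"] Bij_imp_extensional by (force simp: one_BijGroup)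

lemma BijGroup_mult_apply:
  "f \<in> Bij S \<Longrightarrow> g \<in> Bij S \<Longrightarrow> x \<in> S \<Longrightarrow> (f \<otimes>\<^bsub>BijGroup S\<^esub> g) x = f (g x)"
  by (simp add: BijGroup_def compose_def)

lemma BijGroup_pow_fixes_point:
  assumes "f \<in> Bij S" "x \<in> S" "f x = x"
  shows "(f [^]\<^bsub>BijGroup S\<^esub> (m::nat)) x = x"
proof (induction m)
  case 0
  show ?case using assms(2) by (simp add: one_BijGroup)
next
  case (Suc m)
  have "f [^]\<^bsub>BijGroup S\<^esub> m \<in> Bij S"
    using monoid.nat_pow_closed[OF group.is_monoid[OF group_BijGroup]] assms(1)
    by (metis carrier_BijGroup)
  then show ?case using Suc assms by (simp add: BijGroup_mult_apply)
qed

lemma subset_two_closure: "H \<subseteq> Bij S \<Longrightarrow> H \<subseteq> two_closure S H"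
  unfolding two_closure_def by blast

lemma two_closure_eq_if_trivial_stabilizer:
  assumes sub: "subgroup H (BijGroup S)" and a: "a \<in> S"
    and stab: "\<And>f. f \<in> H \<Longrightarrow> f a = a \<Longrightarrow> f = \<one>\<^bsub>BijGroup S\<^esub>"
  shows "two_closure S H = H"
proof
  interpret B: group "BijGroup S" by (rule group_BijGroup)
  have HB: "H \<subseteq> Bij S" using subgroup.subset[OF sub] by (simp add: carrier_BijGroup)
  show "H \<subseteq> two_closure S H" using subset_two_closure[OF HB] .
  show "two_closure S H \<subseteq> H"
  proof
    fix \<theta> assume \<theta>: "\<theta> \<in> two_closure S H"
    then obtain f0 where f0: "f0 \<in> H" "\<theta> a = f0 a" using a unfolding two_closure_def by blast
    have agree: "\<theta> b = f0 b" if b: "b \<in> S" for b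
    proof -
      obtain f where f: "f \<in> H" "\<theta> a = f a" "\<theta> b = f b"
        using \<theta> a b unfolding two_closure_def by blast
      define u where "u = inv\<^bsub>BijGroup S\<^esub> f0 \<otimes>\<^bsub>BijGroup S\<^esub> f"
      have uH: "u \<in> H" unfolding u_def using sub f f0 by (simp add: subgroup.m_closed subgroup.m_inv_closed)
      have fB: "f0 \<in> Bij S" "f \<in> Bij S" "u \<in> Bij S" using f f0 uH HB by auto
      have cB: "f0 \<in> carrier (BijGroup S)" "f \<in> carrier (BijGroup S)"
        using fB by (simp_all add: carrier_BijGroup)
      then have fu: "f = f0 \<otimes>\<^bsub>BijGroup S\<^esub> u"
        unfolding u_def by (simp add: B.m_assoc[symmetric])
      have "f0 (u a) = f0 a" using f f0 fu a fB by (simp add: BijGroup_mult_apply)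
      moreover have "u a \<in> S" using fB(3) a Bij_imp_funcset by blast
      moreover have "inj_on f0 S" using fB(1) by (simp add: Bij_def bij_betw_def)
      ultimately have "u a = a" using a by (meson inj_onD)
      then have "f = f0" using fu stab[OF uH] cB by simp
      then show ?thesis using f by simp
    qed
    have "\<theta> \<in> extensional S" "f0 \<in> extensional S"
      using \<theta> f0 HB unfolding two_closure_def by (auto simp: Bij_def)
    then have "\<theta> = f0" using agree by (rule extensionalityI)
    then show "\<theta> \<in> H" using f0 by simp
  qed
qed

(* On a finite set the pair condition alone makes \<theta> a permutation. *)
lemma two_closure_memI:
  assumes fin: "finite S" and HB: "H \<subseteq> Bij S" and ext: "\<theta> \<in> extensional S"
    and pairs: "\<And>a b. a \<in> S \<Longrightarrow> b \<in> S \<Longrightarrow> \<exists>f\<in>H. \<theta> a = f a \<and> \<theta> b = f b"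
  shows "\<theta> \<in> two_closure S H"
proof -
  have into: "\<theta> ` S \<subseteq> S"
    using pairs HB Bij_imp_funcset by fastforce
  have "inj_on \<theta> S"
  proof (rule inj_onI)
    fix a b assume ab: "a \<in> S" "b \<in> S" "\<theta> a = \<theta> b"
    then obtain f where "f \<in> H" "\<theta> a = f a" "\<theta> b = f b" using pairs by blast
    then show "a = b" using ab HB by (auto simp: Bij_def bij_betw_def dest: inj_onD)
  qed
  then have "bij_betw \<theta> S S" using endo_inj_surj[OF fin into] by (simp add: bij_betw_def)
  then show ?thesis using ext pairs by (simp add: two_closure_def Bij_def)
qed

lemma cyclic_prime_power_trivial_stabilizer:
  assumes sub: "subgroup H (BijGroup S)" and cyc: "cyclic_group (BijGroup S\<lparr>carrier := H\<rparr>)"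
    and p: "Factorial_Ring.prime (p::nat)" and card: "card H = p ^ n" and S: "S \<noteq> {}"
  shows "\<exists>a\<in>S. \<forall>f\<in>H. f a = a \<longrightarrow> f = \<one>\<^bsub>BijGroup S\<^esub>"
proof (cases n)
  case 0
  then have "H = {\<one>\<^bsub>BijGroup S\<^esub>}"
    using card subgroup.one_closed[OF sub] by (metis One_nat_def card_1_singletonE power_0 singletonD)
  then show ?thesis using S by blast
next
  case (Suc n')
  define K where "K = BijGroup S\<lparr>carrier := H\<rparr>"
  interpret K: group K unfolding K_def by (rule group.subgroup_imp_group[OF group_BijGroup sub])
  have HB: "H \<subseteq> Bij S" using subgroup.subset[OF sub] by (simp add: carrier_BijGroup)
  have oneK: "\<one>\<^bsub>K\<^esub> = \<one>\<^bsub>BijGroup S\<^esub>" unfolding K_def by simp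
  have powK: "f [^]\<^bsub>K\<^esub> (k::nat) = f [^]\<^bsub>BijGroup S\<^esub> k" for f k
    unfolding K_def by (simp add: nat_pow_def)
  obtain g where g: "g \<in> H" "subgroup_generated K {g} = K"
    using cyc unfolding K_def cyclic_group_def by auto
  have gK: "g \<in> carrier K" using g by (simp add: K_def)
  have ord: "K.ord g = p ^ Suc n'"
    using K.cyclic_order_is_ord[of g] g card Suc by (simp add: K_def order_def)
  have "finite H" using card p Suc by (metis card.infinite not_prime_0 power_eq_0_iff)
  then have Hpow: "H = {g [^]\<^bsub>K\<^esub> k | k. k \<in> (UNIV :: nat set)}"
    using K.generate_pow_on_finite_carrier[of g] g carrier_subgroup_generated[of K "{g}"]
    by (simp add: K_def)
  define z where "z = g [^]\<^bsub>K\<^esub> (p ^ n')"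
  have "z \<noteq> \<one>\<^bsub>BijGroup S\<^esub>"
    using K.pow_eq_id[OF gK, of "p ^ n'"] ord prime_gt_1_nat[OF p] oneK by (simp add: z_def)
  moreover have "z \<in> Bij S" using Hpow HB z_def by blast
  ultimately obtain a where a: "a \<in> S" "z a \<noteq> a" using Bij_moves_point by blast
  have "f = \<one>\<^bsub>BijGroup S\<^esub>" if f: "f \<in> H" "f a = a" for f
  proof (rule ccontr)
    assume "f \<noteq> \<one>\<^bsub>BijGroup S\<^esub>"
    moreover obtain k :: nat where k: "f = g [^]\<^bsub>K\<^esub> k" using f Hpow by blast
    ultimately have "g [^]\<^bsub>K\<^esub> k \<noteq> \<one>\<^bsub>K\<^esub>" using oneK by simp
    then obtain m :: nat where "f [^]\<^bsub>K\<^esub> m = z"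
      using K.exists_pow_eq_socle[OF p gK ord] k unfolding z_def by blast
    then have "z a = a" using BijGroup_pow_fixes_point[of f S a m] f HB a powK by auto
    then show False using a by blast
  qed
  then show ?thesis using a by blast
qed

lemma two_closure_cyclic_prime_power:
  assumes sub: "subgroup H (BijGroup S)" and cyc: "cyclic_group (BijGroup S\<lparr>carrier := H\<rparr>)"
    and p: "Factorial_Ring.prime (p::nat)" and card: "card H = p ^ n"
  shows "two_closure S H = H"
proof (cases "S = {}")
  case True
  have "Bij S \<subseteq> {\<lambda>x. undefined}" using True by (auto simp: Bij_def)
  moreover have "H \<noteq> {}" and HB: "H \<subseteq> Bij S"
    using subgroup.one_closed[OF sub] subgroup.subset[OF sub] by (auto simp: carrier_BijGroup)
  moreover have "two_closure S H \<subseteq> Bij S" unfolding two_closure_def by blast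
  ultimately show ?thesis using subset_two_closure[OF HB] by blast
next
  case False
  then obtain a where "a \<in> S" "\<forall>f\<in>H. f a = a \<longrightarrow> f = \<one>\<^bsub>BijGroup S\<^esub>"
    using cyclic_prime_power_trivial_stabilizer[OF sub cyc p card] by blast
  then show ?thesis using two_closure_eq_if_trivial_stabilizer[OF sub] by blast
qed

definition transport_perm :: "('d \<Rightarrow> 'b) \<Rightarrow> 'd set \<Rightarrow> ('d \<Rightarrow> 'd) \<Rightarrow> 'b \<Rightarrow> 'b" where
  "transport_perm e A k = (\<lambda>y \<in> e ` A. e (k (inv_into A e y)))"

lemma transport_perm_apply:
  "inj_on e A \<Longrightarrow> x \<in> A \<Longrightarrow> transport_perm e A k (e x) = e (k x)"
  by (simp add: transport_perm_def)

lemma transport_perm_Bij: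
  assumes e: "inj_on e A" and k: "k \<in> Bij A"
  shows "transport_perm e A k \<in> Bij (e ` A)"
proof -
  have eA: "bij_betw e A (e ` A)" using e by (rule inj_on_imp_bij_betw)
  have "bij_betw (inv_into A e) (e ` A) A" using bij_betw_inv_into[OF eA] .
  moreover have "bij_betw k A A" using k by (simp add: Bij_def)
  ultimately have "bij_betw (e \<circ> (k \<circ> inv_into A e)) (e ` A) (e ` A)"
    using eA by (blast intro: bij_betw_trans)
  then have "bij_betw (transport_perm e A k) (e ` A) (e ` A)"
    by (rule bij_betw_cong[THEN iffD1, rotated]) (simp add: transport_perm_def)
  then show ?thesis by (simp add: Bij_def transport_perm_def)
qed

lemma transport_perm_hom:
  assumes e: "inj_on e A"
  shows "transport_perm e A \<in> hom (BijGroup A) (BijGroup (e ` A))"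
proof (rule homI)
  show "transport_perm e A k \<in> carrier (BijGroup (e ` A))" if "k \<in> carrier (BijGroup A)" for k
    using transport_perm_Bij[OF e] that by (simp add: carrier_BijGroup)
  fix k l assume kl: "k \<in> carrier (BijGroup A)" "l \<in> carrier (BijGroup A)"
  then have B: "k \<in> Bij A" "l \<in> Bij A" "k \<otimes>\<^bsub>BijGroup A\<^esub> l \<in> Bij A"
    using group.subgroup_self[OF group_BijGroup] subgroup.m_closed by (fastforce simp: BijGroup_def)+
  have "transport_perm e A (k \<otimes>\<^bsub>BijGroup A\<^esub> l) y
          = (transport_perm e A k \<otimes>\<^bsub>BijGroup (e ` A)\<^esub> transport_perm e A l) y" for y
  proof (cases "y \<in> e ` A")
    case True
    then obtain x where x: "x \<in> A" "y = e x" by blast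
    have "l x \<in> A" using B(2) x(1) Bij_imp_funcset by blast
    then show ?thesis
      using x B e transport_perm_Bij[OF e]
      by (simp add: BijGroup_mult_apply transport_perm_apply)
  next
    case False
    then show ?thesis
      using B transport_perm_Bij[OF e]
      by (simp add: BijGroup_def transport_perm_def compose_def)
  qed
  then show "transport_perm e A (k \<otimes>\<^bsub>BijGroup A\<^esub> l)
               = transport_perm e A k \<otimes>\<^bsub>BijGroup (e ` A)\<^esub> transport_perm e A l" ..
qed

lemma inj_on_transport_perm:
  assumes e: "inj_on e A"
  shows "inj_on (transport_perm e A) (Bij A)"
proof (rule inj_onI)
  fix k l assume kl: "k \<in> Bij A" "l \<in> Bij A" "transport_perm e A k = transport_perm e A l"
  have "k x = l x" if "x \<in> A" for x
  proof -
    have "e (k x) = e (l x)" using kl(3) that e by (metis transport_perm_apply)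
    then show ?thesis using e kl that Bij_imp_funcset by (metis PiE inj_onD)
  qed
  then show "k = l" using kl Bij_imp_extensional extensionalityI by metis
qed

lemma two_closure_transport_perm:
  assumes e: "inj_on e A" and \<theta>: "\<theta> \<in> two_closure A H"
  shows "transport_perm e A \<theta> \<in> two_closure (e ` A) (transport_perm e A ` H)"
  unfolding two_closure_def
proof (intro CollectI conjI ballI)
  show "transport_perm e A \<theta> \<in> Bij (e ` A)"
    using \<theta> transport_perm_Bij[OF e] by (simp add: two_closure_def)
  fix y z assume "y \<in> e ` A" "z \<in> e ` A"
  then obtain a b where ab: "a \<in> A" "b \<in> A" "y = e a" "z = e b" by blast
  then obtain f where "f \<in> H" "\<theta> a = f a" "\<theta> b = f b"
    using \<theta> unfolding two_closure_def by blast
  then show "\<exists>f\<in>transport_perm e A ` H.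
      transport_perm e A \<theta> y = f y \<and> transport_perm e A \<theta> z = f z"
    using ab e by (auto simp: transport_perm_apply)
qed

lemma finite_set_embeds_into_infinite_type:
  assumes "finite (A :: 'd set)" and "infinite (UNIV :: 'b set)"
  shows "\<exists>e :: 'd \<Rightarrow> 'b. inj_on e A"
proof -
  obtain B :: "'b set" where "finite B" "card B = card A"
    using infinite_arbitrarily_large[OF assms(2)] by blast
  then show ?thesis using card_le_inj[OF assms(1)] by (metis order_refl)
qed

lemma two_closure_faithful_image:
  fixes G :: "('a, 'c) monoid_scheme" and A :: "'d set"
  assumes tc: "two_closed_group TYPE('b) G" and inf: "infinite (UNIV :: 'b set)"
    and grp: "group G" and fin: "finite A"
    and phi: "\<phi> \<in> hom G (BijGroup A)" and faithful: "inj_on \<phi> (carrier G)"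
  shows "two_closure A (\<phi> ` carrier G) = \<phi> ` carrier G"
proof
  obtain e :: "'d \<Rightarrow> 'b" where e: "inj_on e A"
    using finite_set_embeds_into_infinite_type[OF fin inf] by blast
  let ?T = "transport_perm e A"
  have phiB: "\<phi> ` carrier G \<subseteq> Bij A" using phi by (auto simp: hom_def carrier_BijGroup)
  have psi: "?T \<circ> \<phi> \<in> hom G (BijGroup (e ` A))"
    using phi transport_perm_hom[OF e] by (rule hom_compose)
  have psi_inj: "inj_on (?T \<circ> \<phi>) (carrier G)"
    using faithful inj_on_transport_perm[OF e] phiB by (blast intro: comp_inj_on inj_on_subset)
  let ?H = "(?T \<circ> \<phi>) ` carrier G"
  have gh: "group_hom G (BijGroup (e ` A)) (?T \<circ> \<phi>)"
    using psi grp group_BijGroup by (simp add: group_hom_def group_hom_axioms_def)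
  have "?T \<circ> \<phi> \<in> iso G ((BijGroup (e ` A))\<lparr>carrier := ?H\<rparr>)"
    using psi psi_inj unfolding iso_def hom_def bij_betw_def by (auto simp: BijGroup_def)
  then have "(BijGroup (e ` A))\<lparr>carrier := ?H\<rparr> \<cong> G"
    using group.iso_sym[OF grp] unfolding is_iso_def by blast
  then have closed: "two_closure (e ` A) ?H = ?H"
    using tc group_hom.img_is_subgroup[OF gh] unfolding two_closed_group_def by blast
  show "two_closure A (\<phi> ` carrier G) \<subseteq> \<phi> ` carrier G"
  proof
    fix \<theta> assume \<theta>: "\<theta> \<in> two_closure A (\<phi> ` carrier G)"
    then have "?T \<theta> \<in> ?H" using two_closure_transport_perm[OF e \<theta>] closed by (simp add: image_comp)
    then obtain g where g: "g \<in> carrier G" "?T \<theta> = ?T (\<phi> g)" by auto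
    moreover have "\<theta> \<in> Bij A" using \<theta> by (simp add: two_closure_def)
    ultimately have "\<theta> = \<phi> g" using inj_on_transport_perm[OF e] phiB by (blast dest: inj_onD)
    then show "\<theta> \<in> \<phi> ` carrier G" using g by blast
  qed
  show "\<phi> ` carrier G \<subseteq> two_closure A (\<phi> ` carrier G)" using subset_two_closure[OF phiB] .
qed

(* The disjoint union of the coset spaces G / S i (i \<in> I); the label keeps equal cosets of
   different subgroups apart. *)
definition labelled_cosets ::
    "('a, 'm) monoid_scheme \<Rightarrow> ('i \<Rightarrow> 'a set) \<Rightarrow> 'i set \<Rightarrow> ('i \<times> 'a set) set" where
  "labelled_cosets G S I = {(i, h <#\<^bsub>G\<^esub> S i) | i h. i \<in> I \<and> h \<in> carrier G}"

definition coset_perm ::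
    "('a, 'm) monoid_scheme \<Rightarrow> ('i \<Rightarrow> 'a set) \<Rightarrow> 'i set \<Rightarrow> 'a \<Rightarrow> 'i \<times> 'a set \<Rightarrow> 'i \<times> 'a set" where
  "coset_perm G S I g = (\<lambda>w \<in> labelled_cosets G S I. (fst w, g <#\<^bsub>G\<^esub> snd w))"

locale subgroup_family = group G for G (structure) +
  fixes S :: "'i \<Rightarrow> 'a set" and I :: "'i set"
  assumes subgroup_S: "i \<in> I \<Longrightarrow> subgroup (S i) G"
begin

abbreviation "\<Omega> \<equiv> labelled_cosets G S I"
abbreviation "\<phi> \<equiv> coset_perm G S I"

lemma S_subset: "i \<in> I \<Longrightarrow> S i \<subseteq> carrier G"
  using subgroup_S subgroup.subset by blast

lemma finite_labelled_cosets: "finite I \<Longrightarrow> finite (carrier G) \<Longrightarrow> finite \<Omega>"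
proof -
  assume "finite I" "finite (carrier G)"
  moreover have "\<Omega> = (\<lambda>(i, h). (i, h <# S i)) ` (I \<times> carrier G)"
    unfolding labelled_cosets_def by auto
  ultimately show ?thesis by simp
qed

lemma labelled_cosetsE:
  assumes "w \<in> \<Omega>"
  obtains i h where "i \<in> I" "h \<in> carrier G" "w = (i, h <# S i)"
  using assms unfolding labelled_cosets_def by blast

lemma subgroup_in_labelled_cosets: "i \<in> I \<Longrightarrow> (i, S i) \<in> \<Omega>"
  unfolding labelled_cosets_def using lcos_mult_one[OF S_subset] by fastforce

lemma coset_perm_apply:
  assumes "i \<in> I" "g \<in> carrier G" "h \<in> carrier G"
  shows "\<phi> g (i, h <# S i) = (i, (g \<otimes> h) <# S i)"
  using assms lcos_m_assoc[OF S_subset] by (auto simp: coset_perm_def labelled_cosets_def)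

lemma coset_perm_closed: "g \<in> carrier G \<Longrightarrow> w \<in> \<Omega> \<Longrightarrow> \<phi> g w \<in> \<Omega>"
  by (erule labelled_cosetsE) (auto simp: coset_perm_apply labelled_cosets_def)

lemma coset_perm_mult:
  "g \<in> carrier G \<Longrightarrow> h \<in> carrier G \<Longrightarrow> w \<in> \<Omega> \<Longrightarrow> \<phi> (g \<otimes> h) w = \<phi> g (\<phi> h w)"
  by (erule labelled_cosetsE) (simp add: coset_perm_apply m_assoc)

lemma coset_perm_one: "w \<in> \<Omega> \<Longrightarrow> \<phi> \<one> w = w"
  by (erule labelled_cosetsE) (simp add: coset_perm_apply)

lemma coset_perm_Bij:
  assumes g: "g \<in> carrier G"
  shows "\<phi> g \<in> Bij \<Omega>"
proof -
  have "bij_betw (\<phi> g) \<Omega> \<Omega>"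
  proof (rule bij_betwI[where g = "\<phi> (inv g)"])
    show "\<phi> g \<in> \<Omega> \<rightarrow> \<Omega>" "\<phi> (inv g) \<in> \<Omega> \<rightarrow> \<Omega>"
      using coset_perm_closed g by auto
    show "\<phi> (inv g) (\<phi> g w) = w" "\<phi> g (\<phi> (inv g) w) = w" if "w \<in> \<Omega>" for w
      using that g by (simp_all flip: coset_perm_mult add: coset_perm_one)
  qed
  then show ?thesis by (simp add: Bij_def coset_perm_def)
qed

lemma coset_perm_hom: "\<phi> \<in> hom G (BijGroup \<Omega>)"
proof (rule homI)
  show "\<phi> g \<in> carrier (BijGroup \<Omega>)" if "g \<in> carrier G" for g
    using coset_perm_Bij that by (simp add: carrier_BijGroup)
  fix g h assume gh: "g \<in> carrier G" "h \<in> carrier G"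
  have "\<phi> (g \<otimes> h) = compose \<Omega> (\<phi> g) (\<phi> h)"
  proof (rule extensionalityI[where A = \<Omega>])
    show "\<phi> (g \<otimes> h) \<in> extensional \<Omega>" by (simp add: coset_perm_def)
  qed (simp_all add: compose_def coset_perm_mult gh)
  then show "\<phi> (g \<otimes> h) = \<phi> g \<otimes>\<^bsub>BijGroup \<Omega>\<^esub> \<phi> h"
    using coset_perm_Bij gh by (simp add: BijGroup_def)
qed

lemma lcos_eq_subgroup_iff:
  assumes "i \<in> I" "g \<in> carrier G"
  shows "g <# S i = S i \<longleftrightarrow> g \<in> S i"
proof
  assume "g <# S i = S i"
  then show "g \<in> S i"
    using assms subgroup.one_closed[OF subgroup_S] unfolding l_coset_def by force
next
  assume "g \<in> S i"
  then show "g <# S i = S i"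
    using l_repr_independence[of g \<one> "S i"] assms subgroup_S lcos_mult_one[OF S_subset] by simp
qed

lemma coset_perm_fixes_subgroup_iff:
  assumes "i \<in> I" "g \<in> carrier G"
  shows "\<phi> g (i, S i) = (i, S i) \<longleftrightarrow> g \<in> S i"
  using coset_perm_apply[of i g \<one>] assms lcos_mult_one[OF S_subset] lcos_eq_subgroup_iff by simp

end

lemma (in subgroup_family) coset_perm_fixes_labelled_coset:
  assumes "comm_group G" "i \<in> I" "y \<in> S i" "w \<in> \<Omega>" "fst w = i"
  shows "\<phi> y w = w"
proof -
  interpret comm_group G by (rule assms(1))
  have y: "y \<in> carrier G" using assms S_subset by blast
  obtain h where h: "h \<in> carrier G" "w = (i, h <# S i)"
    using assms(4,5) by (auto elim: labelled_cosetsE)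
  have "\<phi> y w = (i, (h \<otimes> y) <# S i)"
    using coset_perm_apply h y assms(2) m_comm by simp
  also have "\<dots> = (i, h <# (y <# S i))" using lcos_m_assoc[OF S_subset] h y assms(2) by simp
  also have "y <# S i = S i" using lcos_eq_subgroup_iff assms(2,3) y by blast
  finally show ?thesis using h by simp
qed

lemma (in subgroup_family) inj_on_coset_perm:
  assumes core: "(\<Inter>i\<in>I. S i) \<subseteq> {\<one>}"
  shows "inj_on \<phi> (carrier G)"
proof -
  have "g = \<one>" if g: "g \<in> carrier G" "\<phi> g = \<one>\<^bsub>BijGroup \<Omega>\<^esub>" for g
  proof -
    have "g \<in> S i" if "i \<in> I" for i
    proof -
      have "(i, S i) \<in> \<Omega>" using subgroup_in_labelled_cosets that by blast
      then have "\<phi> g (i, S i) = (i, S i)" using g by (simp add: one_BijGroup)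
      then show ?thesis using coset_perm_fixes_subgroup_iff that g(1) by blast
    qed
    then show ?thesis using core by blast
  qed
  moreover have "group_hom G (BijGroup \<Omega>) \<phi>"
    using coset_perm_hom group_BijGroup by (simp add: group_hom_def group_hom_axioms_def)
  ultimately show ?thesis using group_hom.inj_on_one_iff by blast
qed

locale subgroup_triple = comm_group G for G (structure) +
  fixes A B C :: "'a set" and x b :: 'a
  assumes subgroup_A: "subgroup A G" and subgroup_B: "subgroup B G" and subgroup_C: "subgroup C G"
    and x_in_A: "x \<in> A" and b_in_B: "b \<in> B" and inv_x_b_in_C: "inv x \<otimes> b \<in> C"
    and A_Int_B: "A \<inter> B = {\<one>}" and x_notin_C: "x \<notin> C"
begin

sublocale subgroup_family G "(!) [A, B, C]" "{0, 1, 2}"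
  by (rule subgroup_family.intro[OF is_group])
    (auto simp: subgroup_family_axioms_def subgroup_A subgroup_B subgroup_C)

(* On any two points twist agrees with \<one>, x or b. *)
definition twist :: "nat \<times> 'a set \<Rightarrow> nat \<times> 'a set" where
  "twist = (\<lambda>w\<in>\<Omega>. if fst w = 2 then \<phi> x w else w)"

lemma x_b_carrier: "x \<in> carrier G" "b \<in> carrier G"
  using subgroup.mem_carrier[OF subgroup_A x_in_A] subgroup.mem_carrier[OF subgroup_B b_in_B]
  by auto

lemma fst_labelled_coset: "w \<in> \<Omega> \<Longrightarrow> fst w \<in> {0, 1, 2}"
  by (elim labelled_cosetsE) simp

lemma coset_perm_fixes: "w \<in> \<Omega> \<Longrightarrow> fst w = i \<Longrightarrow> y \<in> [A, B, C] ! i \<Longrightarrow> \<phi> y w = w"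
  using coset_perm_fixes_labelled_coset[OF comm_group_axioms] fst_labelled_coset by blast

lemma twist_eq_x:
  assumes w: "w \<in> \<Omega>" "fst w \<noteq> 1"
  shows "twist w = \<phi> x w"
proof (cases "fst w = 2")
  case False
  then have "fst w = 0" using w(2) fst_labelled_coset[OF w(1)] by simp
  then show ?thesis using w(1) coset_perm_fixes[of w 0 x] x_in_A by (simp add: twist_def)
next
  case True
  then show ?thesis using w(1) by (simp add: twist_def)
qed

lemma twist_eq_b:
  assumes w: "w \<in> \<Omega>" "fst w \<noteq> 0"
  shows "twist w = \<phi> b w"
proof (cases "fst w = 2")
  case True
  have "\<phi> b w = \<phi> (x \<otimes> (inv x \<otimes> b)) w"
    using x_b_carrier by (simp add: m_assoc[symmetric])
  also have "\<dots> = \<phi> x (\<phi> (inv x \<otimes> b) w)"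
    using coset_perm_mult x_b_carrier w(1) by simp
  finally show ?thesis using True coset_perm_fixes[of w 2 "inv x \<otimes> b"] inv_x_b_in_C w(1)
    by (simp add: twist_def)
next
  case False
  then have "fst w = 1" using w(2) fst_labelled_coset[OF w(1)] by simp
  then show ?thesis using w(1) coset_perm_fixes[of w 1 b] b_in_B by (simp add: twist_def)
qed

lemma twist_eq_one: "w \<in> \<Omega> \<Longrightarrow> fst w \<noteq> 2 \<Longrightarrow> twist w = \<phi> \<one> w"
  using coset_perm_one by (simp add: twist_def)

lemma twist_in_two_closure:
  assumes "finite (carrier G)"
  shows "twist \<in> two_closure \<Omega> (\<phi> ` carrier G)"
proof (rule two_closure_memI)
  show "finite \<Omega>" using finite_labelled_cosets assms by simp
  show "\<phi> ` carrier G \<subseteq> Bij \<Omega>" using coset_perm_Bij by blast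
  show "twist \<in> extensional \<Omega>" by (simp add: twist_def)
  fix u v assume uv: "u \<in> \<Omega>" "v \<in> \<Omega>"
  consider "fst u \<noteq> 1" "fst v \<noteq> 1" | "fst u \<noteq> 0" "fst v \<noteq> 0" | "fst u \<noteq> 2" "fst v \<noteq> 2"
    using fst_labelled_coset[OF uv(1)] fst_labelled_coset[OF uv(2)] by fastforce
  then show "\<exists>f\<in>\<phi> ` carrier G. twist u = f u \<and> twist v = f v"
  proof cases
    case 1
    then show ?thesis using uv twist_eq_x x_b_carrier by blast
  next
    case 2
    then show ?thesis using uv twist_eq_b x_b_carrier by blast
  next
    case 3
    then show ?thesis using uv twist_eq_one one_closed by blast
  qed
qed

lemma twist_notin_image: "twist \<notin> \<phi> ` carrier G"
proof
  assume "twist \<in> \<phi> ` carrier G"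
  then obtain g where g: "g \<in> carrier G" "twist = \<phi> g" by blast
  have "g \<in> [A, B, C] ! i" if "i \<in> {0, 1}" for i
  proof -
    have "(i, [A, B, C] ! i) \<in> \<Omega>" using subgroup_in_labelled_cosets that by blast
    then have "\<phi> g (i, [A, B, C] ! i) = (i, [A, B, C] ! i)"
      using that fun_cong[OF g(2), of "(i, [A, B, C] ! i)"] by (auto simp: twist_def)
    then show ?thesis using coset_perm_fixes_subgroup_iff that g(1) by blast
  qed
  then have "g \<in> A \<inter> B" by fastforce
  then have "g = \<one>" using A_Int_B by blast
  moreover have "(2, C) \<in> \<Omega>" using subgroup_in_labelled_cosets[of 2] by simp
  ultimately have "\<phi> x (2, C) = (2, C)"
    using fun_cong[OF g(2), of "(2, C)"] coset_perm_one by (simp add: twist_def)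
  then show False using coset_perm_fixes_subgroup_iff[of 2 x] x_b_carrier x_notin_C by simp
qed

lemma not_two_closed_group:
  assumes "infinite (UNIV :: 'u set)" "finite (carrier G)"
  shows "\<not> two_closed_group TYPE('u) G"
proof
  assume "two_closed_group TYPE('u) G"
  moreover have "(\<Inter>i\<in>{0, 1, 2}. [A, B, C] ! i) \<subseteq> {\<one>}" using A_Int_B by auto
  ultimately have "two_closure \<Omega> (\<phi> ` carrier G) = \<phi> ` carrier G"
    using two_closure_faithful_image[OF _ assms(1) is_group finite_labelled_cosets coset_perm_hom
        inj_on_coset_perm] assms(2) by simp
  then show False using twist_in_two_closure[OF assms(2)] twist_notin_image by blast
qed

end

lemma (in comm_group) cyclic_if_two_closed_group:
  assumes inf: "infinite (UNIV :: 'u set)" and fin: "finite (carrier G)"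
    and p: "Factorial_Ring.prime (p::nat)" and ordG: "order G = p ^ n"
    and tc: "two_closed_group TYPE('u) G"
  shows "cyclic_group G"
proof (rule ccontr)
  assume "\<not> cyclic_group G"
  then obtain g x where g: "g \<in> carrier G" "p dvd ord g"
    and x: "x \<in> carrier G" "x [^] p = \<one>" "x \<notin> generate G {g}"
    using noncyclic_prime_power_witness[OF fin p ordG] by blast
  have inter: "generate G {x} \<inter> generate G {g} = {\<one>}"
    using generate_Int_subgroup_eq_one[OF p x(1,2) _ x(3)] generate_is_subgroup g(1)
    by simp
  have "x \<noteq> \<one>" using x(3) generate.one by blast
  then have notin: "x \<notin> generate G {inv x \<otimes> g}"
    using notin_generate_inv_mult[OF fin x(1) g(1) x(2) g(2) inter] by blast
  interpret subgroup_triple G "generate G {x}" "generate G {g}" "generate G {inv x \<otimes> g}" x g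
    using x(1) g(1) inter notin
    by (intro subgroup_triple.intro comm_group_axioms)
      (simp add: subgroup_triple_axioms_def generate_is_subgroup generate.incl)
  have "\<not> two_closed_group TYPE('u) G" using not_two_closed_group[OF inf fin] .
  then show False using tc by blast
qed

lemma (in group) two_closed_group_if_cyclic:
  assumes p: "Factorial_Ring.prime (p::nat)" and ordG: "order G = p ^ n" and cyc: "cyclic_group G"
  shows "two_closed_group TYPE('u) G"
  unfolding two_closed_group_def
proof (intro allI impI, elim conjE)
  fix \<Omega> :: "'u set" and H
  assume sub: "subgroup H (BijGroup \<Omega>)" and iso: "BijGroup \<Omega>\<lparr>carrier := H\<rparr> \<cong> G"
  have "cyclic_group (BijGroup \<Omega>\<lparr>carrier := H\<rparr>)"
    using isomorphic_group_cyclicity[OF iso group.subgroup_imp_group[OF group_BijGroup sub] is_group]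
      cyc by simp
  moreover have "card H = p ^ n" using iso_same_card[OF iso] ordG by (simp add: order_def)
  ultimately show "two_closure \<Omega> H = H" using two_closure_cyclic_prime_power[OF sub _ p] by blast
qed

theorem mainTheorem8:
  fixes G :: "('a, 'c) monoid_scheme" and p :: nat
  assumes "infinite (UNIV :: 'b set)"
    and "Factorial_Ring.prime p"
    and "comm_group G"
    and "finite (carrier G)"
    and "\<exists>n. order G = p ^ n"
  shows "two_closed_group TYPE('b) G \<longleftrightarrow> cyclic_group G"
proof -
  interpret comm_group G by (rule assms(3))
  obtain n where "order G = p ^ n" using assms(5) by blast
  then show ?thesis
    using cyclic_if_two_closed_group[OF assms(1,4,2)] two_closed_group_if_cyclic[OF assms(2)] by blast
qed

end
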